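(* Let $k$ be a field and $S=k[x_1,\ldots,x_n]$. If $F\subset S$ is a robust set of polynomials and $0\le j\le n$, then $F\cap k[x_1,\ldots,x_j]$ is a robust set of polynomials in $k[x_1,\ldots,x_j]$.
   Context: A set $F$ of polynomials in a polynomial ring is robust if it is a Gröbner basis of the ideal $(F)$ with respect to every monomial term order and its elements minimally generate $(F)$. *)

theory Defs
  imports Main "HOL-Library.Poly_Mapping"
begin

text \<open>A monomial t (an exponent vector) stands for the product of x_i ^ (Poly_Mapping.lookup t i).\<close>

type_synonym monom = "nat \<Rightarrow>\<^sub>0 nat"
type_synonym 'a mpoly = "monom \<Rightarrow>\<^sub>0 'a"

definition monoms_in :: "nat \<Rightarrow> monom set" where
  "monoms_in n = {t. Poly_Mapping.keys t \<subseteq> {1..n}}"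

definition polys_in :: "nat \<Rightarrow> 'a::zero mpoly set" where
  "polys_in n = {p. Poly_Mapping.keys p \<subseteq> monoms_in n}"

inductive_set ideal_gen :: "nat \<Rightarrow> 'a::field mpoly set \<Rightarrow> 'a mpoly set"
  for n :: nat and F :: "'a mpoly set" where
  zero: "0 \<in> ideal_gen n F"
| gen: "f \<in> F \<Longrightarrow> f \<in> ideal_gen n F"
| add: "a \<in> ideal_gen n F \<Longrightarrow> b \<in> ideal_gen n F \<Longrightarrow> a + b \<in> ideal_gen n F"
| mult: "q \<in> polys_in n \<Longrightarrow> a \<in> ideal_gen n F \<Longrightarrow> q * a \<in> ideal_gen n F"

definition term_order :: "nat \<Rightarrow> (monom \<Rightarrow> monom \<Rightarrow> bool) \<Rightarrow> bool" where
  "term_order n le \<longleftrightarrow>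
     (\<forall>s\<in>monoms_in n. le s s) \<and>
     (\<forall>s\<in>monoms_in n. \<forall>t\<in>monoms_in n. \<forall>u\<in>monoms_in n. le s t \<longrightarrow> le t u \<longrightarrow> le s u) \<and>
     (\<forall>s\<in>monoms_in n. \<forall>t\<in>monoms_in n. le s t \<longrightarrow> le t s \<longrightarrow> s = t) \<and>
     (\<forall>s\<in>monoms_in n. \<forall>t\<in>monoms_in n. le s t \<or> le t s) \<and>
     (\<forall>t\<in>monoms_in n. le 0 t) \<and>
     (\<forall>s\<in>monoms_in n. \<forall>t\<in>monoms_in n. \<forall>u\<in>monoms_in n. le s t \<longrightarrow> le (s + u) (t + u))"

definition lead_monom :: "(monom \<Rightarrow> monom \<Rightarrow> bool) \<Rightarrow> 'a::zero mpoly \<Rightarrow> monom" where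
  "lead_monom le p = (THE t. t \<in> Poly_Mapping.keys p \<and> (\<forall>s\<in>Poly_Mapping.keys p. le s t))"

definition monom_dvd :: "monom \<Rightarrow> monom \<Rightarrow> bool" where
  "monom_dvd s t \<longleftrightarrow> (\<forall>i. Poly_Mapping.lookup s i \<le> Poly_Mapping.lookup t i)"

definition is_groebner :: "nat \<Rightarrow> (monom \<Rightarrow> monom \<Rightarrow> bool) \<Rightarrow> 'a::field mpoly set \<Rightarrow> bool" where
  "is_groebner n le G \<longleftrightarrow>
     (\<forall>p\<in>ideal_gen n G. p \<noteq> 0 \<longrightarrow>
        (\<exists>g\<in>G. g \<noteq> 0 \<and> monom_dvd (lead_monom le g) (lead_monom le p)))"

definition minimally_generates :: "nat \<Rightarrow> 'a::field mpoly set \<Rightarrow> bool" where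
  "minimally_generates n F \<longleftrightarrow> (\<forall>f\<in>F. ideal_gen n (F - {f}) \<noteq> ideal_gen n F)"

definition robust :: "nat \<Rightarrow> 'a::field mpoly set \<Rightarrow> bool" where
  "robust n F \<longleftrightarrow> F \<subseteq> polys_in n \<and>
     (\<forall>le. term_order n le \<longrightarrow> is_groebner n le F) \<and>
     minimally_generates n F"

end

theory Submission
  imports Defs
begin

text \<open>Extend a term order on $k[x_1,\ldots,x_j]$ to an elimination order on
$k[x_1,\ldots,x_n]$ that first compares the exponents of $x_{j+1},\ldots,x_n$
lexicographically. Under it every monomial below a monomial of $k[x_1,\ldots,x_j]$ lies in
$k[x_1,\ldots,x_j]$ again. Hence if the leading monomial of some $g \in F$ divides that of a
nonzero $p \in (F \cap k[x_1,\ldots,x_j])$, then $g \in k[x_1,\ldots,x_j]$, and on such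
polynomials the two orders have the same leading monomials. Minimality descends because a
redundancy among generators in $k[x_1,\ldots,x_j]$ is also one in $k[x_1,\ldots,x_n]$.\<close>

definition low_part :: "nat \<Rightarrow> monom \<Rightarrow> monom" where
  "low_part j = Poly_Mapping.mapp (\<lambda>i e. if i \<le> j then e else 0)"

lemma lookup_low_part:
  "Poly_Mapping.lookup (low_part j s) i = (if i \<le> j then Poly_Mapping.lookup s i else 0)"
  by (simp add: low_part_def lookup_mapp when_def in_keys_iff)

lemma mem_monoms_in_iff:
  "s \<in> monoms_in n \<longleftrightarrow> (\<forall>i. (i = 0 \<or> n < i) \<longrightarrow> Poly_Mapping.lookup s i = 0)"
proof
  assume "s \<in> monoms_in n"
  then show "\<forall>i. (i = 0 \<or> n < i) \<longrightarrow> Poly_Mapping.lookup s i = 0"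
    by (auto simp: monoms_in_def in_keys_iff)
next
  assume vanish: "\<forall>i. (i = 0 \<or> n < i) \<longrightarrow> Poly_Mapping.lookup s i = 0"
  show "s \<in> monoms_in n"
    unfolding monoms_in_def mem_Collect_eq
  proof
    fix i assume "i \<in> Poly_Mapping.keys s"
    then have "\<not> (i = 0 \<or> n < i)"
      using vanish in_keys_iff by blast
    then show "i \<in> {1..n}"
      by simp
  qed
qed

lemma monoms_in_mono: "j \<le> n \<Longrightarrow> monoms_in j \<subseteq> monoms_in n"
  by (auto simp: monoms_in_def)

lemma monoms_in_add: "s \<in> monoms_in n \<Longrightarrow> t \<in> monoms_in n \<Longrightarrow> s + t \<in> monoms_in n"
  by (simp add: mem_monoms_in_iff lookup_add)

lemma monom_dvd_monoms_in: "monom_dvd s t \<Longrightarrow> t \<in> monoms_in n \<Longrightarrow> s \<in> monoms_in n"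
  by (metis le_zero_eq mem_monoms_in_iff monom_dvd_def)

lemma low_part_in_monoms_in: "s \<in> monoms_in n \<Longrightarrow> low_part j s \<in> monoms_in j"
  by (simp add: mem_monoms_in_iff lookup_low_part)

lemma low_part_id: "s \<in> monoms_in j \<Longrightarrow> low_part j s = s"
  by (rule poly_mapping_eqI) (simp add: lookup_low_part mem_monoms_in_iff)

lemma low_part_add: "low_part j (s + t) = low_part j s + low_part j t"
  by (rule poly_mapping_eqI) (simp add: lookup_low_part lookup_add)

lemma low_part_zero: "low_part j 0 = 0"
  by (rule poly_mapping_eqI) (simp add: lookup_low_part)

lemma polys_in_mono: "j \<le> n \<Longrightarrow> polys_in j \<subseteq> polys_in n"
  using monoms_in_mono by (fastforce simp: polys_in_def)

lemma polys_in_zero: "0 \<in> polys_in n"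
  by (simp add: polys_in_def)

lemma polys_in_add: "p \<in> polys_in n \<Longrightarrow> q \<in> polys_in n \<Longrightarrow> p + q \<in> polys_in n"
  using keys_add[of p q] by (auto simp: polys_in_def)

lemma polys_in_mult:
  fixes p q :: "'a::semiring_0 mpoly"
  assumes "p \<in> polys_in n" and "q \<in> polys_in n"
  shows "p * q \<in> polys_in n"
  using keys_mult[of p q] assms monoms_in_add by (fastforce simp: polys_in_def)

lemma ideal_gen_subset_polys_in:
  assumes "F \<subseteq> polys_in n" shows "ideal_gen n F \<subseteq> polys_in n"
proof
  fix p assume "p \<in> ideal_gen n F"
  then show "p \<in> polys_in n"
  proof induction
    case zero
    then show ?case by (rule polys_in_zero)
  next
    case (gen f)
    then show ?case using assms by blast
  next
    case (add a b)
    from add.IH show ?case by (rule polys_in_add)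
  next
    case (mult q a)
    from mult.hyps(1) mult.IH show ?case by (rule polys_in_mult)
  qed
qed

lemma ideal_gen_subset_ideal_gen:
  assumes "j \<le> n" and "F \<subseteq> ideal_gen n G"
  shows "ideal_gen j F \<subseteq> ideal_gen n G"
proof
  fix p assume "p \<in> ideal_gen j F"
  then show "p \<in> ideal_gen n G"
  proof induction
    case (mult q a)
    then show ?case using assms(1) polys_in_mono by (blast intro: ideal_gen.mult)
  qed (use assms(2) in \<open>auto intro: ideal_gen.intros\<close>)
qed

definition high_eq :: "nat \<Rightarrow> monom \<Rightarrow> monom \<Rightarrow> bool" where
  "high_eq j s t \<longleftrightarrow> (\<forall>i>j. Poly_Mapping.lookup s i = Poly_Mapping.lookup t i)"

definition high_less :: "nat \<Rightarrow> monom \<Rightarrow> monom \<Rightarrow> bool" where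
  "high_less j s t \<longleftrightarrow> (\<exists>i>j. Poly_Mapping.lookup s i < Poly_Mapping.lookup t i \<and>
     (\<forall>k. j < k \<longrightarrow> k < i \<longrightarrow> Poly_Mapping.lookup s k = Poly_Mapping.lookup t k))"

lemma high_eq_refl: "high_eq j s s"
  by (simp add: high_eq_def)

lemma high_eq_sym: "high_eq j s t \<Longrightarrow> high_eq j t s"
  by (simp add: high_eq_def)

lemma high_eq_trans: "high_eq j s t \<Longrightarrow> high_eq j t u \<Longrightarrow> high_eq j s u"
  by (simp add: high_eq_def)

lemma high_eq_add_right_iff: "high_eq j (s + u) (t + u) \<longleftrightarrow> high_eq j s t"
  by (simp add: high_eq_def lookup_add)

lemma high_less_add_right_iff: "high_less j (s + u) (t + u) \<longleftrightarrow> high_less j s t"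
  by (simp add: high_less_def lookup_add)

lemma high_less_imp_not_high_eq: "high_less j s t \<Longrightarrow> \<not> high_eq j s t"
  unfolding high_less_def high_eq_def by force

lemma high_less_high_eq_trans: "high_less j s t \<Longrightarrow> high_eq j t u \<Longrightarrow> high_less j s u"
  unfolding high_less_def high_eq_def by (metis order.strict_trans)

lemma high_eq_high_less_trans: "high_eq j s t \<Longrightarrow> high_less j t u \<Longrightarrow> high_less j s u"
  unfolding high_less_def high_eq_def by (metis order.strict_trans)

lemma high_less_trans:
  assumes "high_less j s t" and "high_less j t u"
  shows "high_less j s u"
proof -
  obtain i1 where i1: "i1 > j" "Poly_Mapping.lookup s i1 < Poly_Mapping.lookup t i1"
      "\<forall>k. j < k \<longrightarrow> k < i1 \<longrightarrow> Poly_Mapping.lookup s k = Poly_Mapping.lookup t k"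
    using assms(1) unfolding high_less_def by blast
  obtain i2 where i2: "i2 > j" "Poly_Mapping.lookup t i2 < Poly_Mapping.lookup u i2"
      "\<forall>k. j < k \<longrightarrow> k < i2 \<longrightarrow> Poly_Mapping.lookup t k = Poly_Mapping.lookup u k"
    using assms(2) unfolding high_less_def by blast
  show ?thesis
    unfolding high_less_def
    by (rule exI[of _ "min i1 i2"]) (use i1 i2 in \<open>auto simp: min_def not_le\<close>)
qed

lemma high_less_asym: "high_less j s t \<Longrightarrow> \<not> high_less j t s"
  using high_less_trans high_less_imp_not_high_eq high_eq_refl by blast

lemma high_less_trichotomy: "high_less j s t \<or> high_eq j s t \<or> high_less j t s"
proof (rule ccontr)
  assume neither: "\<not> (high_less j s t \<or> high_eq j s t \<or> high_less j t s)"
  then have "\<exists>i>j. Poly_Mapping.lookup s i \<noteq> Poly_Mapping.lookup t i"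
    by (auto simp: high_eq_def)
  then obtain i where i: "i > j" "Poly_Mapping.lookup s i \<noteq> Poly_Mapping.lookup t i"
      and below: "\<forall>k. j < k \<longrightarrow> k < i \<longrightarrow> Poly_Mapping.lookup s k = Poly_Mapping.lookup t k"
    using exists_least_iff[where P = "\<lambda>i. i > j \<and> Poly_Mapping.lookup s i \<noteq> Poly_Mapping.lookup t i"]
    by (metis (no_types, lifting))
  have "high_less j s t \<or> high_less j t s"
    unfolding high_less_def using i below by (metis linorder_neqE_nat)
  with neither show False by blast
qed

lemma high_eq_low_part_eq_imp_eq:
  assumes "high_eq j s t" and "low_part j s = low_part j t"
  shows "s = t"
proof (rule poly_mapping_eqI)
  fix i
  show "Poly_Mapping.lookup s i = Poly_Mapping.lookup t i"
    using assms(1) arg_cong[OF assms(2), of "\<lambda>m. Poly_Mapping.lookup m i"]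
    by (cases "i \<le> j") (auto simp: high_eq_def lookup_low_part)
qed

definition elim_order :: "nat \<Rightarrow> (monom \<Rightarrow> monom \<Rightarrow> bool) \<Rightarrow> monom \<Rightarrow> monom \<Rightarrow> bool" where
  "elim_order j le s t \<longleftrightarrow>
     high_less j s t \<or> (high_eq j s t \<and> le (low_part j s) (low_part j t))"

lemma term_order_elim_order:
  assumes "term_order j le"
  shows "term_order n (elim_order j le)"
proof -
  note low = low_part_in_monoms_in[of _ n j]
  have refl: "\<And>s. s \<in> monoms_in j \<Longrightarrow> le s s"
    and trans: "\<And>s t u. \<lbrakk>s \<in> monoms_in j; t \<in> monoms_in j; u \<in> monoms_in j; le s t; le t u\<rbrakk> \<Longrightarrow> le s u"
    and antisym: "\<And>s t. \<lbrakk>s \<in> monoms_in j; t \<in> monoms_in j; le s t; le t s\<rbrakk> \<Longrightarrow> s = t"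
    and total: "\<And>s t. \<lbrakk>s \<in> monoms_in j; t \<in> monoms_in j\<rbrakk> \<Longrightarrow> le s t \<or> le t s"
    and zero_least: "\<And>t. t \<in> monoms_in j \<Longrightarrow> le 0 t"
    and add_mono: "\<And>s t u. \<lbrakk>s \<in> monoms_in j; t \<in> monoms_in j; u \<in> monoms_in j; le s t\<rbrakk>
                     \<Longrightarrow> le (s + u) (t + u)"
    using assms unfolding term_order_def by blast+
  show ?thesis
    unfolding term_order_def
  proof (intro conjI ballI impI)
    fix s assume "s \<in> monoms_in n"
    then show "elim_order j le s s"
      using refl low by (simp add: elim_order_def high_eq_refl)
  next
    fix s t u assume "s \<in> monoms_in n" "t \<in> monoms_in n" "u \<in> monoms_in n"
      and "elim_order j le s t" "elim_order j le t u"
    then show "elim_order j le s u"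
      unfolding elim_order_def
      using trans[OF low low low] high_less_trans high_less_high_eq_trans
        high_eq_high_less_trans high_eq_trans by blast
  next
    fix s t assume "s \<in> monoms_in n" "t \<in> monoms_in n"
      and "elim_order j le s t" "elim_order j le t s"
    then show "s = t"
      unfolding elim_order_def
      using antisym[OF low low] high_eq_low_part_eq_imp_eq high_less_asym
        high_less_imp_not_high_eq high_eq_sym by metis
  next
    fix s t assume "s \<in> monoms_in n" "t \<in> monoms_in n"
    then show "elim_order j le s t \<or> elim_order j le t s"
      unfolding elim_order_def
      using total[OF low low] high_less_trichotomy high_eq_sym by blast
  next
    fix t assume "t \<in> monoms_in n"
    moreover have "\<not> high_less j t 0"
      by (simp add: high_less_def)
    ultimately show "elim_order j le 0 t"
      unfolding elim_order_def
      using zero_least[OF low] high_less_trichotomy[of j 0 t] by (simp add: low_part_zero)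
  next
    fix s t u assume "s \<in> monoms_in n" "t \<in> monoms_in n" "u \<in> monoms_in n"
      and "elim_order j le s t"
    then show "elim_order j le (s + u) (t + u)"
      unfolding elim_order_def high_less_add_right_iff high_eq_add_right_iff low_part_add
      using add_mono[OF low low low] by blast
  qed
qed

lemma elim_order_eq_on_monoms_in:
  assumes "s \<in> monoms_in j" and "t \<in> monoms_in j"
  shows "elim_order j le s t \<longleftrightarrow> le s t"
proof -
  have "high_eq j s t"
    using assms by (simp add: high_eq_def mem_monoms_in_iff)
  then show ?thesis
    using high_less_imp_not_high_eq
    by (auto simp: elim_order_def low_part_id[OF assms(1)] low_part_id[OF assms(2)])
qed

lemma elim_order_below_monoms_in:
  assumes "elim_order j le s t" and "t \<in> monoms_in j" and "s \<in> monoms_in n"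
  shows "s \<in> monoms_in j"
proof -
  have "\<not> high_less j s t"
    using assms(2) by (auto simp: high_less_def mem_monoms_in_iff)
  then have "high_eq j s t"
    using assms(1) by (simp add: elim_order_def)
  then show ?thesis
    using assms(2,3) by (simp add: high_eq_def mem_monoms_in_iff)
qed

lemma term_order_finite_has_greatest:
  assumes "term_order n le" and "finite A" and "A \<noteq> {}" and "A \<subseteq> monoms_in n"
  shows "\<exists>t\<in>A. \<forall>s\<in>A. le s t"
  using assms(2-4)
proof (induction A rule: finite_ne_induct)
  case (singleton x)
  then show ?case
    using assms(1) by (simp add: term_order_def)
next
  case (insert x A)
  then obtain t where t: "t \<in> A" "\<forall>s\<in>A. le s t"
    by auto
  have x: "x \<in> monoms_in n" and t_in: "t \<in> monoms_in n" and A: "A \<subseteq> monoms_in n"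
    using insert.prems t(1) by auto
  have trans: "\<And>s. \<lbrakk>s \<in> monoms_in n; le s t; le t x\<rbrakk> \<Longrightarrow> le s x"
    using assms(1) x t_in unfolding term_order_def by blast
  have "le x t \<or> le t x" and "le x x"
    using assms(1) x t_in unfolding term_order_def by blast+
  then show ?case
    using t A trans by blast
qed

lemma lead_monom_greatest:
  assumes "term_order n le" and "p \<in> polys_in n" and "p \<noteq> 0"
  shows "lead_monom le p \<in> Poly_Mapping.keys p"
    and "\<forall>s\<in>Poly_Mapping.keys p. le s (lead_monom le p)"
proof -
  have keys: "Poly_Mapping.keys p \<subseteq> monoms_in n"
    using assms(2) by (simp add: polys_in_def)
  obtain t where t: "t \<in> Poly_Mapping.keys p" "\<forall>s\<in>Poly_Mapping.keys p. le s t"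
    using term_order_finite_has_greatest[OF assms(1) finite_keys _ keys] assms(3) by auto
  have "\<exists>!t. t \<in> Poly_Mapping.keys p \<and> (\<forall>s\<in>Poly_Mapping.keys p. le s t)"
  proof (rule ex1I[of _ t])
    fix u assume u: "u \<in> Poly_Mapping.keys p \<and> (\<forall>s\<in>Poly_Mapping.keys p. le s u)"
    have "\<forall>s\<in>monoms_in n. \<forall>t\<in>monoms_in n. le s t \<longrightarrow> le t s \<longrightarrow> s = t"
      using assms(1) unfolding term_order_def by blast
    then show "u = t"
      using u t keys by blast
  qed (use t in blast)
  then have "lead_monom le p \<in> Poly_Mapping.keys p \<and>
      (\<forall>s\<in>Poly_Mapping.keys p. le s (lead_monom le p))"
    unfolding lead_monom_def by (rule theI')
  then show "lead_monom le p \<in> Poly_Mapping.keys p"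
    and "\<forall>s\<in>Poly_Mapping.keys p. le s (lead_monom le p)"
    by blast+
qed

lemma lead_monom_cong:
  assumes "\<And>s t. s \<in> Poly_Mapping.keys p \<Longrightarrow> t \<in> Poly_Mapping.keys p \<Longrightarrow> le1 s t \<longleftrightarrow> le2 s t"
  shows "lead_monom le1 p = lead_monom le2 p"
  unfolding lead_monom_def using assms by (metis (no_types, lifting))

lemma lead_monom_elim_order:
  assumes "p \<in> polys_in j"
  shows "lead_monom (elim_order j le) p = lead_monom le p"
  using assms by (intro lead_monom_cong elim_order_eq_on_monoms_in) (auto simp: polys_in_def)

lemma polys_in_if_lead_monom_elim_order_in:
  assumes "term_order j le" and "g \<in> polys_in n" and "g \<noteq> 0"
    and "lead_monom (elim_order j le) g \<in> monoms_in j"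
  shows "g \<in> polys_in j"
  using elim_order_below_monoms_in lead_monom_greatest(2)[OF term_order_elim_order[OF assms(1)] assms(2,3)]
    assms(2,4) unfolding polys_in_def by blast

lemma is_groebner_restrict:
  assumes "j \<le> n" and "F \<subseteq> polys_in n" and "term_order j le"
    and "is_groebner n (elim_order j le) F"
  shows "is_groebner j le (F \<inter> polys_in j)"
  unfolding is_groebner_def
proof (intro ballI impI)
  fix p assume p: "p \<in> ideal_gen j (F \<inter> polys_in j)" and "p \<noteq> 0"
  have elim: "term_order n (elim_order j le)"
    using assms(3) by (rule term_order_elim_order)
  have p_j: "p \<in> polys_in j"
    using ideal_gen_subset_polys_in[of "F \<inter> polys_in j" j] p by blast
  have "F \<inter> polys_in j \<subseteq> ideal_gen n F"
    by (blast intro: ideal_gen.gen)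
  then have "p \<in> ideal_gen n F"
    using ideal_gen_subset_ideal_gen[OF assms(1)] p by blast
  then obtain g where g: "g \<in> F" "g \<noteq> 0"
    and dvd: "monom_dvd (lead_monom (elim_order j le) g) (lead_monom (elim_order j le) p)"
    using assms(4) \<open>p \<noteq> 0\<close> unfolding is_groebner_def by blast
  have "lead_monom (elim_order j le) p \<in> monoms_in j"
    using lead_monom_greatest(1)[OF elim _ \<open>p \<noteq> 0\<close>] p_j polys_in_mono[OF assms(1)]
    unfolding polys_in_def by blast
  then have "lead_monom (elim_order j le) g \<in> monoms_in j"
    using dvd by (rule monom_dvd_monoms_in[rotated])
  then have g_j: "g \<in> polys_in j"
    using polys_in_if_lead_monom_elim_order_in[OF assms(3) _ g(2)] g(1) assms(2) by blast
  show "\<exists>g\<in>F \<inter> polys_in j. g \<noteq> 0 \<and> monom_dvd (lead_monom le g) (lead_monom le p)"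
    using g g_j dvd by (auto simp: lead_monom_elim_order p_j)
qed

lemma minimally_generates_restrict:
  assumes "j \<le> n" and "minimally_generates n F"
  shows "minimally_generates j (F \<inter> polys_in j)"
  unfolding minimally_generates_def
proof (intro ballI notI)
  fix f assume f: "f \<in> F \<inter> polys_in j"
    and eq: "ideal_gen j (F \<inter> polys_in j - {f}) = ideal_gen j (F \<inter> polys_in j)"
  have "f \<in> ideal_gen j (F \<inter> polys_in j - {f})"
    using f eq ideal_gen.gen by blast
  also have "\<dots> \<subseteq> ideal_gen n (F - {f})"
    using assms(1) by (rule ideal_gen_subset_ideal_gen) (blast intro: ideal_gen.gen)
  finally have "F \<subseteq> ideal_gen n (F - {f})"
    by (blast intro: ideal_gen.gen)
  then have "ideal_gen n F \<subseteq> ideal_gen n (F - {f})"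
    by (rule ideal_gen_subset_ideal_gen[OF order_refl])
  moreover have "ideal_gen n (F - {f}) \<subseteq> ideal_gen n F"
    by (rule ideal_gen_subset_ideal_gen[OF order_refl]) (blast intro: ideal_gen.gen)
  ultimately show False
    using assms(2) f unfolding minimally_generates_def by blast
qed

theorem proposition2p5:
  fixes F :: "'a::field mpoly set" and n j :: nat
  assumes "robust n F" and "j \<le> n"
  shows "robust j (F \<inter> polys_in j)"
proof -
  have F: "F \<subseteq> polys_in n" and groebner: "\<And>le. term_order n le \<Longrightarrow> is_groebner n le F"
    and minimal: "minimally_generates n F"
    using assms(1) unfolding robust_def by blast+
  have "is_groebner j le (F \<inter> polys_in j)" if "term_order j le" for le
    using assms(2) F that groebner[OF term_order_elim_order[OF that]] by (rule is_groebner_restrict)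
  then show ?thesis
    using minimally_generates_restrict[OF assms(2) minimal] unfolding robust_def by blast
qed

end
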